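(* Let $p<q$ be coprime positive integers, $m$ a positive integer, $j\in\{3,4\}$ and $R=\mathbb C[X_0,X_1,X_j]$. Define $\mu:\mathbb Z^3\to\mathbb Z^3$, $\mu(d_0,d_1,d_j)=(d_0-pd_1+qd_j,\;d_1-d_j,\;pd_1-qd_j)$ (injective), $\Lambda=\mu(\mathbb Z_{\ge0}^3)$, and for $\lambda\in\Lambda$ let $f_\lambda=X_0^{d_0}X_1^{d_1}X_j^{d_j}$ where $\mu(d_0,d_1,d_j)=\lambda$. For $(n,c)$ with $(n,c,\omega)\in\Lambda$ for some $\omega$, let $\omega_{(n,c)}=\min\{\omega:(n,c,\omega)\in\Lambda\}$. For $(n,d)\in\mathbb Z\times\mathbb Z/m\mathbb Z$ let $\Lambda_{(n,d)}=\{(n,c,\omega)\in\Lambda: c\equiv d \pmod m\}$ and $c_{(n,d)}=\min\{c\in\mathbb Z: c\equiv d\pmod m,\ (n,c,\omega)\in\Lambda\text{ for some }\omega\}$. Let $\lambda=(n,c,\omega)$ and $\lambda'=(n,c',\omega')$ be elements of $\Lambda_{(n,d)}$. Then, with ideals taken in $R$: (i) if $c=c'$, then $f_\lambda-f_{\lambda'}\in(X_0^{q-p}-X_1X_j)$; (ii) if $c>c_{(n,d)}$, then $f_\lambda\in(X_0^{q-p}-X_1X_j,\;X_0^{mp}X_1^m)$; (iii) $f_\lambda-f_{\lambda'}\in(X_0^{q-p}-X_1X_j,\;1-X_0^{mp}X_1^m)$. If moreover $m=a(q-p)$ for a positive integer $a$, then: (iv) if $\omega=\omega'$, then $f_\lambda-f_{\lambda'}\in(1-X_1^{aq}X_j^{ap})$;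 (v) if $\omega=\omega_{(n,c)}$ and $\omega'=\omega_{(n,c')}$, then $\omega=\omega'$, and in particular $f_\lambda-f_{\lambda'}\in(1-X_1^{aq}X_j^{ap})$.
   Context: The minima $\omega_{(n,c)}$ and $c_{(n,d)}$ exist (the defining sets are nonempty and bounded below). The first coordinate of $\mu$ is the weight of the monomial under the $\mathbb C^*$-action with weights $1,-p,q$ on $X_0,X_1,X_j$, and $c\bmod m$ is its $\mu_m$-weight. *)

theory Defs
  imports Complex_Main "HOL-Computational_Algebra.Polynomial" "HOL-Number_Theory.Cong"
begin

text \<open>R = C[X0,X1,Xj] is modelled as the iterated polynomial ring
  ((complex poly) poly) poly: innermost variable X0, middle X1, outermost Xj.\<close>
type_synonym R3 = "complex poly poly poly"

definition mono3 :: "nat \<Rightarrow> nat \<Rightarrow> nat \<Rightarrow> R3" where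
  "mono3 d0 d1 dj = monom (monom (monom 1 d0) d1) dj"

definition X0 :: R3 where "X0 = mono3 1 0 0"
definition X1 :: R3 where "X1 = mono3 0 1 0"
definition Xj :: R3 where "Xj = mono3 0 0 1"

definition mu :: "nat \<Rightarrow> nat \<Rightarrow> nat \<times> nat \<times> nat \<Rightarrow> int \<times> int \<times> int" where
  "mu p q d = (case d of (d0, d1, dj) \<Rightarrow>
     (int d0 - int p * int d1 + int q * int dj, int d1 - int dj, int p * int d1 - int q * int dj))"

definition Lambda :: "nat \<Rightarrow> nat \<Rightarrow> (int \<times> int \<times> int) set" where
  "Lambda p q = mu p q ` UNIV"

definition flam :: "nat \<Rightarrow> nat \<Rightarrow> int \<times> int \<times> int \<Rightarrow> R3" where
  "flam p q l = (THE f. \<exists>d0 d1 dj. mu p q (d0, d1, dj) = l \<and> f = mono3 d0 d1 dj)"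

definition omega_min :: "nat \<Rightarrow> nat \<Rightarrow> int \<Rightarrow> int \<Rightarrow> int" where
  "omega_min p q n c = (LEAST w. (n, c, w) \<in> Lambda p q)"

definition c_min :: "nat \<Rightarrow> nat \<Rightarrow> nat \<Rightarrow> int \<Rightarrow> int \<Rightarrow> int" where
  "c_min p q m n d = (LEAST c. [c = d] (mod int m) \<and> (\<exists>w. (n, c, w) \<in> Lambda p q))"

definition in_ideal1 :: "R3 \<Rightarrow> R3 \<Rightarrow> bool" where
  "in_ideal1 f g \<longleftrightarrow> (\<exists>a. f = a * g)"

definition in_ideal2 :: "R3 \<Rightarrow> R3 \<Rightarrow> R3 \<Rightarrow> bool" where
  "in_ideal2 f g h \<longleftrightarrow> (\<exists>a b. f = a * g + b * h)"

end

theory Submission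
  imports Defs "HOL-Library.Product_Plus"
begin

text \<open>Writing lambda = mu(d0, d1, dj) one finds d0 = n + omega, d1 - dj = c and
  p c - omega = (q - p) dj, so Lambda consists of the (n, c, omega) with -n \<le> omega \<le> min (p c) (q c)
  and omega \<equiv> p c mod (q - p).  Two points of Lambda over the same (n, c) differ by k (q - p) in
  omega, and their monomials differ by trading (X1 Xj)^k for X0^(k (q - p)); this gives (i).
  Adding mu(m p, m, 0) = (0, m, p m) raises c by m and multiplies f by X0^(m p) X1^m, so modulo
  X0^(q - p) - X1 Xj every f over (n, d) is a power of X0^(m p) X1^m times the one with the least c;
  this gives (ii) and (iii).  Adding mu(0, a q, a p) = (0, a (q - p), 0) multiplies f by
  X1^(a q) Xj^(a p) and fixes n and omega, which gives (iv).  Finally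
  omega_(n,c) = ((p c + n) mod (q - p)) - n depends only on c mod (q - p), which gives (v).\<close>

lemma mono3_mult: "mono3 a b c * mono3 a' b' c' = mono3 (a + a') (b + b') (c + c')"
  by (simp add: mono3_def mult_monom)

lemma mono3_power: "mono3 a b c ^ k = mono3 (a * k) (b * k) (c * k)"
  by (simp add: mono3_def monom_power)

lemma mono3_eq_powers: "mono3 a b c = X0 ^ a * X1 ^ b * Xj ^ c"
  by (simp add: X0_def X1_def Xj_def mono3_power mono3_mult)

lemma dvd_mult_power_diff:
  fixes x y z :: "'a::comm_ring_1"
  shows "x - y dvd z * x ^ k - z * y ^ k"
proof -
  have "x - y dvd x ^ k - y ^ k"
    by (simp add: power_diff_sumr2)
  then show ?thesis
    by (metis dvd_mult right_diff_distrib)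
qed

lemma dvd_diff_swap: "(a::'a::comm_ring_1) dvd b - c \<longleftrightarrow> a dvd c - b"
  by (metis dvd_minus_iff minus_diff_eq)

lemma in_ideal1_iff_dvd: "in_ideal1 f g \<longleftrightarrow> g dvd f"
  by (auto simp: in_ideal1_def dvd_def mult.commute)

lemma in_ideal2_add: "g dvd a \<Longrightarrow> h dvd b \<Longrightarrow> in_ideal2 (a + b) g h"
  by (auto simp: in_ideal2_def dvd_def mult.commute)

lemma in_ideal2_diff_swap: "in_ideal2 (f - f') g h \<Longrightarrow> in_ideal2 (f' - f) g h"
  unfolding in_ideal2_def by (metis minus_diff_eq minus_add_distrib mult_minus_left)

lemma int_LeastI_bounded:
  fixes P :: "int \<Rightarrow> bool"
  assumes "P x" and bound: "\<And>y. P y \<Longrightarrow> b \<le> y"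
  shows "P (LEAST y. P y)"
proof -
  define k where "k = (LEAST k. P (b + int k))"
  have "P (b + int (nat (x - b)))"
    using assms by simp
  then have Pk: "P (b + int k)"
    unfolding k_def by (rule LeastI)
  have "b + int k \<le> y" if "P y" for y
  proof -
    have "P (b + int (nat (y - b)))"
      using that bound[OF that] by simp
    then have "k \<le> nat (y - b)"
      unfolding k_def by (rule Least_le)
    then show ?thesis
      using bound[OF that] by linarith
  qed
  then have "(LEAST y. P y) = b + int k"
    using Pk by (intro Least_equality)
  then show ?thesis
    using Pk by simp
qed

lemma cong_int_shift_cases:
  fixes c c' :: int
  assumes "[c = c'] (mod int m)"
  obtains t where "c' = c + int m * int t" | t where "c = c' + int m * int t"
proof -
  obtain k where k: "c' = c + int m * k"
    using assms by (auto simp: cong_iff_lin)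
  show ?thesis
  proof (cases "k \<ge> 0")
    case True
    then show ?thesis
      using k that(1)[of "nat k"] by simp
  next
    case False
    then show ?thesis
      using k that(2)[of "nat (- k)"] by simp
  qed
qed

lemma mu_add: "mu p q (d0 + e0, d1 + e1, dj + ej) = mu p q (d0, d1, dj) + mu p q (e0, e1, ej)"
  by (simp add: mu_def algebra_simps)

lemma inj_mu:
  assumes "p \<noteq> q"
  shows "inj (mu p q)"
proof (rule injI)
  fix d e
  assume eq: "mu p q d = mu p q e"
  obtain d0 d1 dj e0 e1 ej where de: "d = (d0, d1, dj)" "e = (e0, e1, ej)"
    by (cases d, cases e) auto
  have eqs: "int d0 - int p * int d1 + int q * int dj = int e0 - int p * int e1 + int q * int ej"
      "int d1 - int dj = int e1 - int ej" "int p * int d1 - int q * int dj = int p * int e1 - int q * int ej"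
    using eq by (auto simp: mu_def de)
  have "(int q - int p) * int dj = (int q - int p) * int ej"
    using eqs(2,3) by algebra
  with assms have "dj = ej"
    by simp
  with eqs show "d = e"
    by (simp add: de)
qed

lemma flam_mu:
  assumes "p \<noteq> q"
  shows "flam p q (mu p q (d0, d1, dj)) = mono3 d0 d1 dj"
  unfolding flam_def by (rule the_equality) (auto dest: injD[OF inj_mu[OF assms]])

lemma LambdaE:
  assumes "l \<in> Lambda p q"
  obtains d0 d1 dj where "l = mu p q (d0, d1, dj)"
  using assms unfolding Lambda_def by auto

lemma flam_add_mu:
  assumes "p \<noteq> q" and "l \<in> Lambda p q"
  shows "l + mu p q (e0, e1, ej) \<in> Lambda p q"
    and "flam p q (l + mu p q (e0, e1, ej)) = flam p q l * mono3 e0 e1 ej"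
proof -
  obtain d0 d1 dj where l: "l = mu p q (d0, d1, dj)"
    using assms(2) by (rule LambdaE)
  have sum: "l + mu p q (e0, e1, ej) = mu p q (d0 + e0, d1 + e1, dj + ej)"
    by (simp add: l mu_add)
  show "l + mu p q (e0, e1, ej) \<in> Lambda p q"
    by (simp add: sum Lambda_def)
  show "flam p q (l + mu p q (e0, e1, ej)) = flam p q l * mono3 e0 e1 ej"
    unfolding sum by (simp add: l flam_mu[OF assms(1)] mono3_mult)
qed

lemma mem_Lambda_iff:
  assumes "p < q"
  shows "(n, c, w) \<in> Lambda p q \<longleftrightarrow>
    0 \<le> n + w \<and> w \<le> int p * c \<and> w \<le> int q * c \<and> int (q - p) dvd int p * c - w"
proof
  assume "(n, c, w) \<in> Lambda p q"
  then obtain d0 d1 dj where "(n, c, w) = mu p q (d0, d1, dj)"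
    by (rule LambdaE)
  then have n: "n = int d0 - int p * int d1 + int q * int dj" and c: "c = int d1 - int dj"
    and w: "w = int p * int d1 - int q * int dj"
    by (simp_all add: mu_def)
  have "int p * c - w = int (q - p) * int dj"
    using assms by (simp add: c w of_nat_diff algebra_simps)
  moreover have "int p * int dj \<le> int q * int dj" and "int p * int d1 \<le> int q * int d1"
    using assms by (simp_all add: mult_right_mono)
  ultimately show "0 \<le> n + w \<and> w \<le> int p * c \<and> w \<le> int q * c \<and> int (q - p) dvd int p * c - w"
    by (auto simp: n c w algebra_simps)
next
  assume "0 \<le> n + w \<and> w \<le> int p * c \<and> w \<le> int q * c \<and> int (q - p) dvd int p * c - w"
  then obtain dj where bounds: "0 \<le> n + w" "w \<le> int p * c" "w \<le> int q * c"
    and dj: "int p * c - w = int (q - p) * dj"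
    by (auto elim: dvdE)
  have qp: "int (q - p) = int q - int p"
    using assms by (simp add: of_nat_diff)
  have "0 \<le> int (q - p) * dj"
    using bounds(2) dj by simp
  then have "0 \<le> dj"
    using assms by (simp add: zero_le_mult_iff)
  moreover have "0 \<le> int (q - p) * (c + dj)"
    using bounds(3) dj qp by (simp add: algebra_simps)
  then have "0 \<le> c + dj"
    using assms by (simp add: zero_le_mult_iff)
  ultimately have "mu p q (nat (n + w), nat (c + dj), nat dj) = (n, c, w)"
    using bounds(1) dj qp by (simp add: mu_def algebra_simps)
  then show "(n, c, w) \<in> Lambda p q"
    unfolding Lambda_def by (metis rangeI)
qed

lemma mu_same_nc_cases:
  assumes "p < q" and d: "(n, c, w) = mu p q (d0, d1, dj)" and e: "(n, c, w') = mu p q (e0, e1, ej)"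
    and "w \<le> w'"
  obtains k where "dj = ej + k" and "d1 = e1 + k" and "e0 = d0 + (q - p) * k"
proof -
  have qp: "int (q - p) = int q - int p"
    using assms(1) by (simp add: of_nat_diff)
  have d0: "int d0 = n + w" and d1: "int d1 = c + int dj"
    and e0: "int e0 = n + w'" and e1: "int e1 = c + int ej"
    using d e by (simp_all add: mu_def)
  have "w = int p * c - int (q - p) * int dj"
    using d d1 qp by (simp add: mu_def algebra_simps)
  moreover have "w' = int p * c - int (q - p) * int ej"
    using e e1 qp by (simp add: mu_def algebra_simps)
  ultimately have diff: "w' - w = int (q - p) * (int dj - int ej)"
    by (simp add: algebra_simps)
  then have "0 \<le> int (q - p) * (int dj - int ej)"
    using assms(4) by simp
  then have "ej \<le> dj"
    using assms(1) by (simp add: zero_le_mult_iff)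
  then obtain k where k: "dj = ej + k"
    using le_iff_add by auto
  moreover have "d1 = e1 + k"
    using d1 e1 k by simp
  moreover have "int e0 = int (d0 + (q - p) * k)"
    using d0 e0 diff k by simp
  then have "e0 = d0 + (q - p) * k"
    by (simp only: of_nat_eq_iff)
  ultimately show ?thesis
    using that by blast
qed

lemma flam_diff_same_nc:
  assumes "p < q" and "(n, c, w) \<in> Lambda p q" and "(n, c, w') \<in> Lambda p q"
  shows "X0 ^ (q - p) - X1 * Xj dvd flam p q (n, c, w) - flam p q (n, c, w')"
  using assms(2,3)
proof (induction w w' rule: linorder_wlog)
  case (le w w')
  obtain d0 d1 dj where d: "(n, c, w) = mu p q (d0, d1, dj)"
    using le(2) by (rule LambdaE)
  obtain e0 e1 ej where e: "(n, c, w') = mu p q (e0, e1, ej)"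
    using le(3) by (rule LambdaE)
  obtain k where k: "dj = ej + k" "d1 = e1 + k" "e0 = d0 + (q - p) * k"
    using mu_same_nc_cases[OF assms(1) d e le(1)] .
  have gens: "X1 * Xj = mono3 0 1 1" "X0 ^ (q - p) = mono3 (q - p) 0 0"
    by (simp_all add: mono3_eq_powers)
  define z where "z = mono3 d0 e1 ej"
  have "flam p q (n, c, w) = z * (X1 * Xj) ^ k"
    by (simp add: d flam_mu less_imp_neq[OF assms(1)] gens k z_def mono3_power mono3_mult)
  moreover have "flam p q (n, c, w') = z * (X0 ^ (q - p)) ^ k"
    by (simp add: e flam_mu less_imp_neq[OF assms(1)] gens k(3) z_def mono3_power mono3_mult)
  ultimately show ?case
    using dvd_mult_power_diff[of "X0 ^ (q - p)" "X1 * Xj" z k] by (metis dvd_diff_swap)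
next
  case (sym w w')
  then show ?case
    by (metis dvd_diff_swap)
qed

lemma flam_shift_c_mod_g:
  assumes "p < q" and "(n, c, w) \<in> Lambda p q" and "(n, c + int m * int t, w') \<in> Lambda p q"
  shows "X0 ^ (q - p) - X1 * Xj dvd
    flam p q (n, c + int m * int t, w') - flam p q (n, c, w) * (X0 ^ (m * p) * X1 ^ m) ^ t"
proof -
  let ?l = "(n, c, w) + mu p q (m * p * t, m * t, 0)"
  have l: "?l = (n, c + int m * int t, w + int p * int m * int t)"
    by (simp add: mu_def algebra_simps)
  have h: "(X0 ^ (m * p) * X1 ^ m) ^ t = mono3 (m * p * t) (m * t) 0"
    by (simp add: mono3_eq_powers power_mult_distrib power_mult)
  have "?l \<in> Lambda p q" and "flam p q ?l = flam p q (n, c, w) * (X0 ^ (m * p) * X1 ^ m) ^ t"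
    using flam_add_mu[OF less_imp_neq[OF assms(1)] assms(2)] by (simp_all only: h)
  then show ?thesis
    using flam_diff_same_nc[OF assms(1) _ assms(3)] l by (metis dvd_diff_swap)
qed

lemma Lambda_c_lower_bound:
  assumes "p < q" and "(n, c, w) \<in> Lambda p q"
  shows "- \<bar>n\<bar> \<le> c"
proof (cases "0 \<le> c")
  case False
  have "- n \<le> int q * c"
    using assms by (simp add: mem_Lambda_iff)
  moreover have "int q * c \<le> 1 * c"
    using False assms(1) by (intro mult_right_mono_neg) auto
  ultimately show ?thesis
    by linarith
qed simp

lemma flam_in_ideal_above_c_min:
  assumes "p < q" and "(n, c, w) \<in> Lambda p q" and "[c = d] (mod int m)"
    and "c_min p q m n d < c"
  shows "in_ideal2 (flam p q (n, c, w)) (X0 ^ (q - p) - X1 * Xj) (X0 ^ (m * p) * X1 ^ m)"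
proof -
  let ?c0 = "c_min p q m n d" and ?h = "X0 ^ (m * p) * X1 ^ m"
  have "[?c0 = d] (mod int m) \<and> (\<exists>w0. (n, ?c0, w0) \<in> Lambda p q)"
    unfolding c_min_def
    by (rule int_LeastI_bounded[of _ c]) (use assms(2,3) Lambda_c_lower_bound[OF assms(1)] in blast)+
  then obtain w0 where w0: "(n, ?c0, w0) \<in> Lambda p q" and cong: "[?c0 = c] (mod int m)"
    using assms(3) by (meson cong_sym cong_trans)
  obtain t where t: "c = ?c0 + int m * int t"
    using cong assms(4) by (cases rule: cong_int_shift_cases) (auto simp: mult_less_0_iff)
  with assms(4) have "0 < t"
    by (cases t) auto
  let ?f0 = "flam p q (n, ?c0, w0)"
  have "X0 ^ (q - p) - X1 * Xj dvd flam p q (n, c, w) - ?f0 * ?h ^ t"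
    using flam_shift_c_mod_g[OF assms(1) w0, of m t w] assms(2) t by simp
  moreover have "?h dvd ?f0 * ?h ^ t"
    using \<open>0 < t\<close> by (simp add: dvd_power)
  ultimately have "in_ideal2 ((flam p q (n, c, w) - ?f0 * ?h ^ t) + ?f0 * ?h ^ t)
      (X0 ^ (q - p) - X1 * Xj) ?h"
    by (rule in_ideal2_add)
  then show ?thesis
    by simp
qed

lemma flam_diff_in_ideal_cong_c:
  assumes "p < q" and "(n, c, w) \<in> Lambda p q" and "(n, c', w') \<in> Lambda p q"
    and "[c = c'] (mod int m)"
  shows "in_ideal2 (flam p q (n, c, w) - flam p q (n, c', w'))
    (X0 ^ (q - p) - X1 * Xj) (1 - X0 ^ (m * p) * X1 ^ m)"
proof -
  let ?g = "X0 ^ (q - p) - X1 * Xj" and ?h = "X0 ^ (m * p) * X1 ^ m"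
  have shifted: "in_ideal2 (flam p q (n, c0, w0) - flam p q (n, c0 + int m * int t, w1)) ?g (1 - ?h)"
    if l0: "(n, c0, w0) \<in> Lambda p q" and l1: "(n, c0 + int m * int t, w1) \<in> Lambda p q"
    for c0 w0 w1 t
  proof -
    let ?f0 = "flam p q (n, c0, w0)" and ?f1 = "flam p q (n, c0 + int m * int t, w1)"
    have "?g dvd ?f0 * ?h ^ t - ?f1"
      using flam_shift_c_mod_g[OF assms(1) l0 l1] by (metis dvd_diff_swap)
    moreover have "1 - ?h dvd ?f0 * 1 ^ t - ?f0 * ?h ^ t"
      by (rule dvd_mult_power_diff)
    ultimately have "in_ideal2 ((?f0 * ?h ^ t - ?f1) + (?f0 * 1 ^ t - ?f0 * ?h ^ t)) ?g (1 - ?h)"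
      by (rule in_ideal2_add)
    then show ?thesis
      by simp
  qed
  from assms(4) show ?thesis
  proof (cases rule: cong_int_shift_cases)
    case (1 t)
    then show ?thesis
      using shifted assms(2,3) by simp
  next
    case (2 t)
    then show ?thesis
      using shifted[of c' w' t w] assms(2,3) by (simp add: in_ideal2_diff_swap)
  qed
qed

lemma flam_diff_same_w:
  assumes "p < q" and "(n, c, w) \<in> Lambda p q" and "(n, c', w) \<in> Lambda p q"
    and "[c = c'] (mod int (a * (q - p)))"
  shows "1 - X1 ^ (a * q) * Xj ^ (a * p) dvd flam p q (n, c, w) - flam p q (n, c', w)"
proof -
  let ?u = "X1 ^ (a * q) * Xj ^ (a * p)"
  have shifted: "1 - ?u dvd flam p q (n, c0, w) - flam p q (n, c0 + int (a * (q - p)) * int t, w)"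
    if l0: "(n, c0, w) \<in> Lambda p q" for c0 t
  proof -
    have l: "(n, c0, w) + mu p q (0, a * q * t, a * p * t) = (n, c0 + int (a * (q - p)) * int t, w)"
      using assms(1) by (simp add: mu_def of_nat_diff algebra_simps)
    have u: "?u ^ t = mono3 0 (a * q * t) (a * p * t)"
      by (simp add: mono3_eq_powers power_mult_distrib power_mult)
    have "flam p q (n, c0 + int (a * (q - p)) * int t, w) = flam p q (n, c0, w) * ?u ^ t"
      using flam_add_mu(2)[OF less_imp_neq[OF assms(1)] l0, of 0 "a * q * t" "a * p * t"]
      by (simp only: l u)
    then show ?thesis
      using dvd_mult_power_diff[of 1 ?u "flam p q (n, c0, w)" t] by simp
  qed
  from assms(4) show ?thesis
  proof (cases rule: cong_int_shift_cases)
    case (1 t)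
    then show ?thesis
      using shifted[OF assms(2)] by simp
  next
    case (2 t)
    then show ?thesis
      using shifted[OF assms(3), of t] by (metis dvd_diff_swap)
  qed
qed

lemma omega_min_eq:
  assumes "p < q" and "(n, c, w) \<in> Lambda p q"
  shows "omega_min p q n c = (int p * c + n) mod int (q - p) - n"
proof -
  let ?w0 = "(int p * c + n) mod int (q - p) - n"
  have below: "?w0 \<le> y" if "(n, c, y) \<in> Lambda p q" for y
  proof -
    have "0 \<le> y + n" and "int (q - p) dvd (int p * c + n) - (y + n)"
      using that assms(1) by (simp_all add: mem_Lambda_iff)
    then have "(int p * c + n) mod int (q - p) = (y + n) mod int (q - p)"
      by (simp add: mod_eq_dvd_iff)
    also have "\<dots> \<le> y + n"
      using \<open>0 \<le> y + n\<close> by (rule zmod_le_nonneg_dividend)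
    finally show ?thesis
      by simp
  qed
  have "0 \<le> n + ?w0"
    using assms(1) by simp
  moreover have "?w0 \<le> int p * c" and "?w0 \<le> int q * c"
    using below[OF assms(2)] assms by (simp_all add: mem_Lambda_iff)
  moreover have "int (q - p) dvd int p * c - ?w0"
    using minus_mod_eq_mult_div[of "int p * c + n" "int (q - p)"] by (simp add: algebra_simps)
  ultimately have "(n, c, ?w0) \<in> Lambda p q"
    using assms(1) by (simp add: mem_Lambda_iff)
  then show ?thesis
    unfolding omega_min_def using below by (rule Least_equality)
qed

lemma omega_min_cong:
  assumes "p < q" and "(n, c, w) \<in> Lambda p q" and "(n, c', w') \<in> Lambda p q"
    and "[c = c'] (mod int (q - p))"
  shows "omega_min p q n c = omega_min p q n c'"
proof -
  have "[int p * c + n = int p * c' + n] (mod int (q - p))"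
    using assms(4) by (intro cong_add cong_mult cong_refl)
  then show ?thesis
    by (simp add: omega_min_eq[OF assms(1,2)] omega_min_eq[OF assms(1,3)] cong_def)
qed

theorem lemma4p18:
  fixes p q m :: nat and n c w c' w' :: int
  assumes "0 < p" and "p < q" and "coprime p q" and "0 < m"
    and "(n, c, w) \<in> Lambda p q" and "(n, c', w') \<in> Lambda p q"
    and "[c = c'] (mod int m)"
  shows "(c = c' \<longrightarrow> in_ideal1 (flam p q (n, c, w) - flam p q (n, c', w')) (X0 ^ (q - p) - X1 * Xj))
    \<and> (c > c_min p q m n c \<longrightarrow>
         in_ideal2 (flam p q (n, c, w)) (X0 ^ (q - p) - X1 * Xj) (X0 ^ (m * p) * X1 ^ m))
    \<and> in_ideal2 (flam p q (n, c, w) - flam p q (n, c', w')) (X0 ^ (q - p) - X1 * Xj) (1 - X0 ^ (m * p) * X1 ^ m)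
    \<and> (\<forall>a::nat. 0 < a \<and> m = a * (q - p) \<longrightarrow>
         (w = w' \<longrightarrow> in_ideal1 (flam p q (n, c, w) - flam p q (n, c', w')) (1 - X1 ^ (a * q) * Xj ^ (a * p)))
       \<and> (w = omega_min p q n c \<and> w' = omega_min p q n c' \<longrightarrow>
            w = w' \<and> in_ideal1 (flam p q (n, c, w) - flam p q (n, c', w')) (1 - X1 ^ (a * q) * Xj ^ (a * p))))"
proof (intro conjI allI impI)
  show "in_ideal1 (flam p q (n, c, w) - flam p q (n, c', w')) (X0 ^ (q - p) - X1 * Xj)" if "c = c'"
    using flam_diff_same_nc[OF assms(2,5)] assms(6) that by (simp add: in_ideal1_iff_dvd)
  show "in_ideal2 (flam p q (n, c, w)) (X0 ^ (q - p) - X1 * Xj) (X0 ^ (m * p) * X1 ^ m)"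
    if "c > c_min p q m n c"
    using flam_in_ideal_above_c_min[OF assms(2,5) cong_refl that] .
  show "in_ideal2 (flam p q (n, c, w) - flam p q (n, c', w')) (X0 ^ (q - p) - X1 * Xj)
      (1 - X0 ^ (m * p) * X1 ^ m)"
    using flam_diff_in_ideal_cong_c[OF assms(2,5,6,7)] .
  fix a :: nat
  assume "0 < a \<and> m = a * (q - p)"
  then have cong_a: "[c = c'] (mod int (a * (q - p)))"
    using assms(7) by simp
  show iv: "in_ideal1 (flam p q (n, c, w) - flam p q (n, c', w')) (1 - X1 ^ (a * q) * Xj ^ (a * p))"
    if "w = w'"
    using flam_diff_same_w[OF assms(2,5) _ cong_a] assms(6) that by (simp add: in_ideal1_iff_dvd)
  assume "w = omega_min p q n c \<and> w' = omega_min p q n c'"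
  moreover have "[c = c'] (mod int (q - p))"
    using cong_a by (rule cong_dvd_modulus) simp
  ultimately show "w = w'"
    using omega_min_cong[OF assms(2,5,6)] by simp
  then show "in_ideal1 (flam p q (n, c, w) - flam p q (n, c', w')) (1 - X1 ^ (a * q) * Xj ^ (a * p))"
    by (rule iv)
qed

end
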